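(* Let $I$ be a dyadic interval with left half $I_l$ and right half $I_r$, and let $\Psi(x_1,\ldots,x_m)$ be a bounded measurable function. Then $$\sum_{\substack{S\subseteq\{1,\ldots,m\}\\|S|\ \text{even}}}\Big[\big\langle\Psi(x_1,\ldots,x_m)\big\rangle_{x_i\in I\ (i\in S)}\Big]_{x_i\in I\ (i\notin S)}=\frac12\big[\Psi(x_1,\ldots,x_m)\big]_{x_1,\ldots,x_m\in I_l}+\frac12\big[\Psi(x_1,\ldots,x_m)\big]_{x_1,\ldots,x_m\in I_r}.$$ In particular, if $\Psi\geq 0$, then the left-hand sum is nonnegative.
   Context: For a dyadic interval $I$ and integrable $f$, $[f(x)]_{x\in I}:=\frac{1}{|I|}\int_I f$ and $\langle f(x)\rangle_{x\in I}:=\frac{1}{|I|}\big(\int_{I_l}f-\int_{I_r}f\big)$; brackets with several subscripted variables denote iterated averages in each variable (for $[\cdot]_{x\in I_l}$ the average is over $I_l$). The sum includes $S=\emptyset$. *)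

theory Defs
  imports "HOL-Analysis.Analysis"
begin

definition dyadic :: "int \<Rightarrow> int \<Rightarrow> real set" where
  "dyadic j k = {real_of_int k * 2 powr (- real_of_int j) ..< (real_of_int k + 1) * 2 powr (- real_of_int j)}"

definition left_half :: "int \<Rightarrow> int \<Rightarrow> real set" where
  "left_half j k = dyadic (j + 1) (2 * k)"

definition right_half :: "int \<Rightarrow> int \<Rightarrow> real set" where
  "right_half j k = dyadic (j + 1) (2 * k + 1)"

text \<open>Functions of the variables x_1,...,x_m are modelled as functions of
  x :: nat \<Rightarrow> real.  Averaging in the variable x_i over a set J:
  [F]_{x_i \<in> J}.\<close>
definition avg_var :: "real set \<Rightarrow> nat \<Rightarrow> ((nat \<Rightarrow> real) \<Rightarrow> real) \<Rightarrow> (nat \<Rightarrow> real) \<Rightarrow> real" where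
  "avg_var J i F = (\<lambda>x. (1 / measure lborel J) * (LINT t:J|lborel. F (x(i := t))))"

definition haar_var :: "int \<Rightarrow> int \<Rightarrow> nat \<Rightarrow> ((nat \<Rightarrow> real) \<Rightarrow> real) \<Rightarrow> (nat \<Rightarrow> real) \<Rightarrow> real" where
  "haar_var j k i F = (\<lambda>x. (1 / measure lborel (dyadic j k)) *
      ((LINT t:left_half j k|lborel. F (x(i := t))) - (LINT t:right_half j k|lborel. F (x(i := t)))))"

definition avg_vars :: "real set \<Rightarrow> nat set \<Rightarrow> ((nat \<Rightarrow> real) \<Rightarrow> real) \<Rightarrow> (nat \<Rightarrow> real) \<Rightarrow> real" where
  "avg_vars J S F = foldr (avg_var J) (sorted_list_of_set S) F"

definition haar_vars :: "int \<Rightarrow> int \<Rightarrow> nat set \<Rightarrow> ((nat \<Rightarrow> real) \<Rightarrow> real) \<Rightarrow> (nat \<Rightarrow> real) \<Rightarrow> real" where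
  "haar_vars j k S F = foldr (haar_var j k) (sorted_list_of_set S) F"

end

theory Submission
  imports Defs
begin

text \<open>Let a = 1_I/|I| and h = (1_{I_l} - 1_{I_r})/|I| be the uniform and the Haar density of I,
  so that a + h and a - h are the uniform densities of I_l and I_r. By Fubini, the summand for S is
  the integral of \<Psi> against the product density \<Prod>_{i \<in> S} h(x_i) \<Prod>_{i \<notin> S} a(x_i). Summed over
  the even S these products give (\<Prod>(a + h) + \<Prod>(a - h))/2, the mean of the uniform product
  densities of I_l^m and I_r^m.\<close>

lemma sum_even_subsets_prod:
  fixes a h :: "'a \<Rightarrow> 'b::comm_ring_1"
  assumes "finite U"
  shows "2 * (\<Sum>S | S \<subseteq> U \<and> even (card S). \<Prod>i\<in>U. if i \<in> S then h i else a i)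
       = (\<Prod>i\<in>U. a i + h i) + (\<Prod>i\<in>U. a i - h i)"
proof -
  define T where "T X = (\<Prod>i\<in>X. h i) * (\<Prod>i\<in>U - X. a i)" for X
  have prod_if: "(\<Prod>i\<in>U. if i \<in> X then h i else a i) = T X" if "X \<subseteq> U" for X
    using prod.If_cases[OF assms, of "\<lambda>i. i \<in> X" h a] that
    by (simp add: T_def Int_absorb1 Diff_eq)
  have "(\<Prod>i\<in>U. a i + h i) + (\<Prod>i\<in>U. a i - h i) = (\<Sum>X\<in>Pow U. (1 + (-1) ^ card X) * T X)"
    using prod_add[OF assms, of h a] prod_diff_conv_sum[OF assms, of a h]
    by (simp add: T_def algebra_simps sum.distrib)
  also have "\<dots> = (\<Sum>X\<in>Pow U. if even (card X) then 2 * T X else 0)"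
    by (intro sum.cong) auto
  also have "\<dots> = 2 * (\<Sum>X | X \<in> Pow U \<and> even (card X). T X)"
    using assms by (simp add: sum.inter_filter[symmetric] sum_distrib_left)
  also have "\<dots> = 2 * (\<Sum>S | S \<subseteq> U \<and> even (card S). \<Prod>i\<in>U. if i \<in> S then h i else a i)"
    by (auto intro!: sum.cong simp: prod_if)
  finally show ?thesis ..
qed

lemma left_half_eq:
  "left_half j k = {real_of_int k * 2 powr - real_of_int j ..< (real_of_int k + 1/2) * 2 powr - real_of_int j}"
  and right_half_eq:
  "right_half j k = {(real_of_int k + 1/2) * 2 powr - real_of_int j ..< (real_of_int k + 1) * 2 powr - real_of_int j}"
proof -
  have half: "(2::real) powr - real_of_int (j + 1) = 2 powr - real_of_int j / 2"
    by (simp add: powr_diff diff_conv_add_uminus[symmetric])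
  show "left_half j k = {real_of_int k * 2 powr - real_of_int j ..< (real_of_int k + 1/2) * 2 powr - real_of_int j}"
    and "right_half j k = {(real_of_int k + 1/2) * 2 powr - real_of_int j ..< (real_of_int k + 1) * 2 powr - real_of_int j}"
    unfolding left_half_def right_half_def dyadic_def half by (simp_all add: algebra_simps add_divide_distrib)
qed

lemma measure_dyadic: "measure lborel (dyadic j k) = 2 powr - real_of_int j"
  unfolding dyadic_def by (simp add: algebra_simps)

lemma measure_left_half: "measure lborel (left_half j k) = 2 powr - real_of_int j / 2"
  and measure_right_half: "measure lborel (right_half j k) = 2 powr - real_of_int j / 2"
  unfolding left_half_eq right_half_eq by (simp_all add: algebra_simps)

lemma indicator_dyadic_split:
  "indicator (dyadic j k) t = (indicator (left_half j k) t + indicator (right_half j k) t :: real)"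
proof -
  have Ico_split: "indicator {l..<u} t = (indicator {l..<c} t + indicator {c..<u} t :: real)"
    if "l \<le> c" "c \<le> u" for l c u :: real
    using that by (auto simp: indicator_def)
  show ?thesis
    unfolding left_half_eq right_half_eq dyadic_def by (rule Ico_split) (simp_all add: mult_right_mono)
qed

lemma dyadic_finite_measure:
  "dyadic j k \<in> sets lborel" "emeasure lborel (dyadic j k) < \<infinity>"
  "left_half j k \<in> sets lborel" "emeasure lborel (left_half j k) < \<infinity>"
  "right_half j k \<in> sets lborel" "emeasure lborel (right_half j k) < \<infinity>"
  unfolding left_half_def right_half_def dyadic_def by auto

abbreviation PiL :: "nat set \<Rightarrow> (nat \<Rightarrow> real) measure" where
  "PiL I \<equiv> PiM I (\<lambda>_. lborel)"

interpretation lborel_product: product_sigma_finite "\<lambda>_::nat. lborel :: real measure"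
  by (simp add: product_sigma_finite_def lborel.sigma_finite_measure_axioms)

definition weighted_avg :: "(real \<Rightarrow> real) \<Rightarrow> nat \<Rightarrow> ((nat \<Rightarrow> real) \<Rightarrow> real) \<Rightarrow> (nat \<Rightarrow> real) \<Rightarrow> real" where
  "weighted_avg w i F = (\<lambda>x. \<integral>t. w t * F (x(i := t)) \<partial>lborel)"

definition uniform_density :: "real set \<Rightarrow> real \<Rightarrow> real" where
  "uniform_density J t = indicator J t / measure lborel J"

definition haar_density :: "int \<Rightarrow> int \<Rightarrow> real \<Rightarrow> real" where
  "haar_density j k t = (indicator (left_half j k) t - indicator (right_half j k) t) / measure lborel (dyadic j k)"

lemma integrable_uniform_density:
  "J \<in> sets lborel \<Longrightarrow> emeasure lborel J < \<infinity> \<Longrightarrow> integrable lborel (uniform_density J)"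
  unfolding uniform_density_def by (intro integrable_divide_zero integrable_real_indicator)

lemma integrable_haar_density: "integrable lborel (haar_density j k)"
  unfolding haar_density_def
  by (intro integrable_divide_zero Bochner_Integration.integrable_diff integrable_real_indicator
      dyadic_finite_measure)

lemma uniform_density_left_half:
  "uniform_density (left_half j k) = (\<lambda>t. uniform_density (dyadic j k) t + haar_density j k t)"
  and uniform_density_right_half:
  "uniform_density (right_half j k) = (\<lambda>t. uniform_density (dyadic j k) t - haar_density j k t)"
  unfolding uniform_density_def haar_density_def indicator_dyadic_split
    measure_dyadic measure_left_half measure_right_half
  by (simp_all add: fun_eq_iff field_simps)

lemma avg_var_eq_weighted_avg: "avg_var J = weighted_avg (uniform_density J)"
  unfolding avg_var_def weighted_avg_def uniform_density_def set_lebesgue_integral_def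
  by (simp add: fun_eq_iff)

lemma haar_var_eq_weighted_avg:
  assumes "set_integrable lborel (left_half j k) (\<lambda>t. F (x(i := t)))"
    and "set_integrable lborel (right_half j k) (\<lambda>t. F (x(i := t)))"
  shows "haar_var j k i F x = weighted_avg (haar_density j k) i F x"
proof -
  have "haar_var j k i F x = (\<integral>t. indicator (left_half j k) t * F (x(i := t))
      - indicator (right_half j k) t * F (x(i := t)) \<partial>lborel) / measure lborel (dyadic j k)"
    using assms unfolding haar_var_def set_lebesgue_integral_def set_integrable_def
    by (subst Bochner_Integration.integral_diff) auto
  then show ?thesis
    unfolding weighted_avg_def haar_density_def by (simp add: left_diff_distrib)
qed

lemma override_on_in_space_PiL:
  "S \<subseteq> I \<Longrightarrow> x \<in> space (PiL I) \<Longrightarrow> override_on x z S \<in> space (PiL I)"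
  by (auto simp: space_PiM PiE_def extensional_def override_on_def)

lemma override_on_PiL_self:
  "x \<in> space (PiL I) \<Longrightarrow> z \<in> space (PiL I) \<Longrightarrow> override_on x z I = z"
  by (auto simp: space_PiM PiE_def extensional_def override_on_def)

lemma upd_in_space_PiL: "i \<in> I \<Longrightarrow> x \<in> space (PiL I) \<Longrightarrow> x(i := t) \<in> space (PiL I)"
  by (auto simp: space_PiM PiE_def extensional_def)

lemma measurable_override_on_PiL:
  assumes "S \<subseteq> I" "x \<in> space (PiL I)"
  shows "(\<lambda>z. override_on x z S) \<in> measurable (PiL S) (PiL I)"
  unfolding override_on_def
proof (rule measurable_PiM_single')
  show "(\<lambda>z. if i \<in> S then z i else x i) \<in> measurable (PiL S) lborel" if "i \<in> I" for i
    by (cases "i \<in> S") simp_all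
  show "(\<lambda>z i. if i \<in> S then z i else x i) \<in> space (PiL S) \<rightarrow> (\<Pi>\<^sub>E i\<in>I. space lborel)"
    using assms by (auto simp: space_PiM PiE_def extensional_def)
qed

lemma measurable_override_on_upd_PiL:
  assumes "R \<subseteq> I" "x \<in> space (PiL I)" "a \<in> I"
  shows "(\<lambda>(t, y). override_on (x(a := t)) y R) \<in> measurable (lborel \<Otimes>\<^sub>M PiL R) (PiL I)"
  unfolding override_on_def split_beta
proof (rule measurable_PiM_single')
  show "(\<lambda>p. if i \<in> R then snd p i else (x(a := fst p)) i) \<in> measurable (lborel \<Otimes>\<^sub>M PiL R) lborel"
    if "i \<in> I" for i
    by (cases "i \<in> R"; cases "i = a")
      (simp_all add: measurable_compose[OF measurable_snd measurable_component_singleton])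
  have "x i = undefined" if "i \<notin> I" for i
    using assms(2) that by (simp add: space_PiM PiE_def extensional_def)
  then show "(\<lambda>p i. if i \<in> R then snd p i else (x(a := fst p)) i) \<in> space (lborel \<Otimes>\<^sub>M PiL R) \<rightarrow> (\<Pi>\<^sub>E i\<in>I. space lborel)"
    using assms(1,3) by (auto simp: PiE_def extensional_def)
qed

lemma foldr_weighted_avg_cong:
  assumes "set is \<subseteq> I" "x \<in> space (PiL I)" "\<And>y. y \<in> space (PiL I) \<Longrightarrow> F y = G y"
  shows "foldr (\<lambda>i. weighted_avg (W i) i) is F x = foldr (\<lambda>i. weighted_avg (W i) i) is G x"
  using assms(1,2)
proof (induction "is" arbitrary: x)
  case Nil
  then show ?case using assms(3) by simp
next
  case (Cons a rest)
  then have "foldr (\<lambda>i. weighted_avg (W i) i) rest F (x(a := t))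
           = foldr (\<lambda>i. weighted_avg (W i) i) rest G (x(a := t))" for t
    using upd_in_space_PiL by simp
  then show ?case by (simp add: weighted_avg_def[of "W a" a])
qed

locale bounded_borel_function =
  fixes m :: nat and \<Psi> :: "(nat \<Rightarrow> real) \<Rightarrow> real" and B :: real
  assumes measurable_Psi: "\<Psi> \<in> borel_measurable (PiL {1..m})"
    and abs_Psi_le: "x \<in> space (PiL {1..m}) \<Longrightarrow> \<bar>\<Psi> x\<bar> \<le> B"
begin

definition weighted_integrand ::
    "(nat \<Rightarrow> real \<Rightarrow> real) \<Rightarrow> nat set \<Rightarrow> (nat \<Rightarrow> real) \<Rightarrow> (nat \<Rightarrow> real) \<Rightarrow> real" where
  "weighted_integrand W S x z = (\<Prod>i\<in>S. W i (z i)) * \<Psi> (override_on x z S)"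

lemma abs_weighted_integrand_le:
  assumes "S \<subseteq> {1..m}" "x \<in> space (PiL {1..m})"
  shows "\<bar>weighted_integrand W S x z\<bar> \<le> B * (\<Prod>i\<in>S. \<bar>W i (z i)\<bar>)"
proof -
  have "\<bar>\<Psi> (override_on x z S)\<bar> \<le> B"
    using abs_Psi_le override_on_in_space_PiL[OF assms] .
  from mult_right_mono[OF this, of "\<Prod>i\<in>S. \<bar>W i (z i)\<bar>"] show ?thesis
    unfolding weighted_integrand_def abs_mult abs_prod by (simp add: mult.commute prod_nonneg)
qed

lemma weighted_integrand_measurable:
  assumes "S \<subseteq> {1..m}" "x \<in> space (PiL {1..m})" "\<And>i. W i \<in> borel_measurable lborel"
  shows "weighted_integrand W S x \<in> borel_measurable (PiL S)"
proof -
  note [measurable] = assms(3)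
    measurable_compose[OF measurable_override_on_PiL[OF assms(1,2)] measurable_Psi]
  show ?thesis
    unfolding weighted_integrand_def[abs_def] by measurable
qed

lemma integrable_weighted_integrand:
  assumes "S \<subseteq> {1..m}" "x \<in> space (PiL {1..m})" "\<And>i. integrable lborel (W i)"
  shows "integrable (PiL S) (weighted_integrand W S x)"
proof (rule Bochner_Integration.integrable_bound)
  show "integrable (PiL S) (\<lambda>z. B * (\<Prod>i\<in>S. \<bar>W i (z i)\<bar>))"
    using finite_subset[OF assms(1)] assms(3)
    by (intro integrable_mult_right lborel_product.product_integrable_prod integrable_abs) auto
  show "weighted_integrand W S x \<in> borel_measurable (PiL S)"
    using assms by (intro weighted_integrand_measurable) auto
  show "AE z in PiL S. norm (weighted_integrand W S x z) \<le> norm (B * (\<Prod>i\<in>S. \<bar>W i (z i)\<bar>))"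
    using order_trans[OF abs_weighted_integrand_le[OF assms(1,2)] abs_ge_self] by simp
qed

lemma abs_integral_weighted_integrand_le:
  assumes "S \<subseteq> {1..m}" "x \<in> space (PiL {1..m})" "\<And>i. integrable lborel (W i)"
  shows "\<bar>\<integral>z. weighted_integrand W S x z \<partial>PiL S\<bar> \<le> (\<integral>z. B * (\<Prod>i\<in>S. \<bar>W i (z i)\<bar>) \<partial>PiL S)"
proof -
  have "\<bar>\<integral>z. weighted_integrand W S x z \<partial>PiL S\<bar> \<le> (\<integral>z. \<bar>weighted_integrand W S x z\<bar> \<partial>PiL S)"
    using integral_norm_bound[of "PiL S" "weighted_integrand W S x"] by simp
  also have "\<dots> \<le> (\<integral>z. B * (\<Prod>i\<in>S. \<bar>W i (z i)\<bar>) \<partial>PiL S)"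
    using finite_subset[OF assms(1)] assms abs_weighted_integrand_le[OF assms(1,2)]
    by (intro integral_mono integrable_abs integrable_weighted_integrand integrable_mult_right
        lborel_product.product_integrable_prod) auto
  finally show ?thesis .
qed

lemma measurable_integral_weighted_integrand_upd:
  assumes "R \<subseteq> {1..m}" "x \<in> space (PiL {1..m})" "a \<in> {1..m}" "\<And>i. W i \<in> borel_measurable lborel"
  shows "(\<lambda>t. \<integral>y. weighted_integrand W R (x(a := t)) y \<partial>PiL R) \<in> borel_measurable lborel"
proof -
  interpret finite_product_sigma_finite "\<lambda>_. lborel :: real measure" R
    by standard (rule finite_subset[OF assms(1)], simp)
  have [measurable]: "(\<lambda>p. \<Psi> (override_on (x(a := fst p)) (snd p) R)) \<in> borel_measurable (lborel \<Otimes>\<^sub>M PiL R)"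
    using measurable_compose[OF measurable_override_on_upd_PiL[OF assms(1-3)] measurable_Psi]
    by (simp add: split_beta')
  note [measurable] = assms(4)
  have "(\<lambda>(t, y). weighted_integrand W R (x(a := t)) y) \<in> borel_measurable (lborel \<Otimes>\<^sub>M PiL R)"
    unfolding weighted_integrand_def split_beta' by measurable
  then show ?thesis by (rule borel_measurable_lebesgue_integral)
qed

lemma weighted_integrand_merge:
  assumes "a \<notin> R" "finite R"
  shows "weighted_integrand W (insert a R) x (merge {a} R (u, y))
       = W a (u a) * weighted_integrand W R (x(a := u a)) y"
proof -
  have "override_on x (merge {a} R (u, y)) (insert a R) = override_on (x(a := u a)) y R"
    using assms by (auto simp: override_on_def merge_def)
  moreover have "(\<Prod>i\<in>R. W i (merge {a} R (u, y) i)) = (\<Prod>i\<in>R. W i (y i))"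
    using assms by (intro prod.cong) (auto simp: merge_def)
  ultimately show ?thesis
    using assms unfolding weighted_integrand_def by (simp add: merge_def)
qed

lemma foldr_weighted_avg_eq_integral:
  assumes "distinct is" "set is \<subseteq> {1..m}" "x \<in> space (PiL {1..m})"
    and "\<And>i. integrable lborel (W i)"
  shows "foldr (\<lambda>i. weighted_avg (W i) i) is \<Psi> x = (\<integral>z. weighted_integrand W (set is) x z \<partial>PiL (set is))"
  using assms(1-3)
proof (induction "is" arbitrary: x)
  case Nil
  show ?case by (simp add: PiM_empty weighted_integrand_def lebesgue_integral_count_space_finite)
next
  case (Cons a rest)
  let ?R = "set rest"
  let ?g = "\<lambda>t. \<integral>y. weighted_integrand W ?R (x(a := t)) y \<partial>PiL ?R"
  have a: "a \<notin> ?R" "a \<in> {1..m}" and rest: "distinct rest" "?R \<subseteq> {1..m}"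
    using Cons.prems by auto
  have IH: "foldr (\<lambda>i. weighted_avg (W i) i) rest \<Psi> (x(a := t)) = ?g t" for t
    using Cons.IH[OF rest upd_in_space_PiL[OF a(2) Cons.prems(3)]] .
  have "?g \<in> borel_measurable lborel" "W a \<in> borel_measurable lborel"
    using measurable_integral_weighted_integrand_upd[OF rest(2) Cons.prems(3) a(2)] assms(4) by auto
  then have meas: "(\<lambda>t. W a t * ?g t) \<in> borel_measurable lborel"
    by measurable
  have "foldr (\<lambda>i. weighted_avg (W i) i) (a # rest) \<Psi> x = (\<integral>t. W a t * ?g t \<partial>lborel)"
    by (simp add: weighted_avg_def IH)
  also have "\<dots> = (\<integral>u. W a (u a) * ?g (u a) \<partial>PiL {a})"
    using lborel_product.product_integral_singleton[OF meas] by simp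
  also have "\<dots> = (\<integral>u. (\<integral>y. weighted_integrand W (insert a ?R) x (merge {a} ?R (u, y)) \<partial>PiL ?R) \<partial>PiL {a})"
    by (simp add: weighted_integrand_merge[OF a(1)])
  also have "\<dots> = (\<integral>z. weighted_integrand W (insert a ?R) x z \<partial>PiL (insert a ?R))"
    using lborel_product.product_integral_fold[of "{a}" ?R "weighted_integrand W (insert a ?R) x"]
      integrable_weighted_integrand[of "insert a ?R" x W] a rest Cons.prems(3) assms(4)
    by simp
  finally show ?case by simp
qed

lemma foldr_haar_var_eq_foldr_weighted_avg:
  assumes "distinct is" "set is \<subseteq> {1..m}" "x \<in> space (PiL {1..m})"
  shows "foldr (haar_var j k) is \<Psi> x = foldr (\<lambda>i. weighted_avg (haar_density j k) i) is \<Psi> x"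
  using assms
proof (induction "is" arbitrary: x)
  case Nil
  then show ?case by simp
next
  case (Cons a rest)
  let ?W = "\<lambda>_::nat. haar_density j k"
  let ?G = "foldr (\<lambda>i. weighted_avg (?W i) i) rest \<Psi>"
  have a: "a \<notin> set rest" "a \<in> {1..m}" and rest: "distinct rest" "set rest \<subseteq> {1..m}"
    using Cons.prems by auto
  have xa: "x(a := t) \<in> space (PiL {1..m})" for t
    using upd_in_space_PiL[OF a(2) Cons.prems(3)] .
  have G: "?G (x(a := t)) = (\<integral>y. weighted_integrand ?W (set rest) (x(a := t)) y \<partial>PiL (set rest))" for t
    by (rule foldr_weighted_avg_eq_integral[OF rest xa integrable_haar_density])
  text \<open>Merging the two set integrals of \<open>haar_var\<close> into one integral needs the inner average
    to be integrable over both halves of \<open>I\<close>; it is, being bounded in \<open>t\<close> since \<open>\<Psi>\<close> is.\<close>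
  have "(\<lambda>t. ?G (x(a := t))) \<in> borel_measurable lborel"
    unfolding G using integrable_haar_density
    by (intro measurable_integral_weighted_integrand_upd[OF rest(2) Cons.prems(3) a(2)]) simp
  moreover have "\<bar>?G (x(a := t))\<bar> \<le> (\<integral>z. B * (\<Prod>i\<in>set rest. \<bar>?W i (z i)\<bar>) \<partial>PiL (set rest))" for t
    unfolding G by (rule abs_integral_weighted_integrand_le[OF rest(2) xa integrable_haar_density])
  ultimately have set_integrable: "set_integrable lborel J (\<lambda>t. ?G (x(a := t)))"
    if "J \<in> sets lborel" "emeasure lborel J < \<infinity>" for J
    unfolding set_integrable_def using that by (intro integrableI_bounded_set_indicator) auto
  have "haar_var j k a ?G x = weighted_avg (haar_density j k) a ?G x"
    using set_integrable dyadic_finite_measure by (intro haar_var_eq_weighted_avg) auto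
  moreover have "foldr (haar_var j k) (a # rest) \<Psi> x = haar_var j k a ?G x"
    unfolding foldr_Cons comp_apply haar_var_def[of j k a] Cons.IH[OF rest xa] ..
  ultimately show ?case by simp
qed

definition weighted_integral :: "(nat \<Rightarrow> real \<Rightarrow> real) \<Rightarrow> real" where
  "weighted_integral W = (\<integral>z. (\<Prod>i\<in>{1..m}. W i (z i)) * \<Psi> z \<partial>PiL {1..m})"

lemma weighted_integrand_full:
  assumes "x \<in> space (PiL {1..m})" "z \<in> space (PiL {1..m})"
  shows "weighted_integrand W {1..m} x z = (\<Prod>i\<in>{1..m}. W i (z i)) * \<Psi> z"
  using assms by (simp add: weighted_integrand_def override_on_PiL_self)

lemma integrable_weighted_integral:
  assumes "\<And>i. integrable lborel (W i)"
  shows "integrable (PiL {1..m}) (\<lambda>z. (\<Prod>i\<in>{1..m}. W i (z i)) * \<Psi> z)"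
proof -
  have x: "(\<lambda>_. undefined) \<in> space (PiL {1..m})"
    by (simp add: space_PiM PiE_def extensional_def)
  have "integrable (PiL {1..m}) (weighted_integrand W {1..m} (\<lambda>_. undefined))
      \<longleftrightarrow> integrable (PiL {1..m}) (\<lambda>z. (\<Prod>i\<in>{1..m}. W i (z i)) * \<Psi> z)"
    using weighted_integrand_full[OF x] by (intro Bochner_Integration.integrable_cong) auto
  then show ?thesis
    using integrable_weighted_integrand[OF order_refl x assms] by simp
qed

lemma foldr_weighted_avg_eq_weighted_integral:
  assumes "distinct is" "set is = {1..m}" "x \<in> space (PiL {1..m})"
    and "\<And>i. integrable lborel (W i)"
  shows "foldr (\<lambda>i. weighted_avg (W i) i) is \<Psi> x = weighted_integral W"
  unfolding foldr_weighted_avg_eq_integral[OF assms(1) equalityD1[OF assms(2)] assms(3,4)]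
    weighted_integral_def assms(2)
  by (intro Bochner_Integration.integral_cong refl weighted_integrand_full[OF assms(3)])

lemma avg_vars_eq_weighted_integral:
  assumes "J \<in> sets lborel" "emeasure lborel J < \<infinity>" "x \<in> space (PiL {1..m})"
  shows "avg_vars J {1..m} \<Psi> x = weighted_integral (\<lambda>_. uniform_density J)"
  unfolding avg_vars_def avg_var_eq_weighted_avg
  using assms integrable_uniform_density by (intro foldr_weighted_avg_eq_weighted_integral) auto

lemma avg_vars_haar_vars_eq_weighted_integral:
  assumes "S \<subseteq> {1..m}" "x \<in> space (PiL {1..m})"
  shows "avg_vars (dyadic j k) ({1..m} - S) (haar_vars j k S \<Psi>) x
       = weighted_integral (\<lambda>i. if i \<in> S then haar_density j k else uniform_density (dyadic j k))"
proof -
  let ?W = "\<lambda>i. if i \<in> S then haar_density j k else uniform_density (dyadic j k)"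
  let ?avg = "\<lambda>i. weighted_avg (?W i) i"
  let ?C = "sorted_list_of_set ({1..m} - S)" and ?S = "sorted_list_of_set S"
  have S: "finite S" "set ?S = S" "distinct ?S"
    using finite_subset[OF assms(1)] by auto
  have C: "set ?C = {1..m} - S" "distinct ?C"
    by auto
  have haar: "haar_vars j k S \<Psi> y = foldr ?avg ?S \<Psi> y" if "y \<in> space (PiL {1..m})" for y
  proof -
    have "haar_vars j k S \<Psi> y = foldr (\<lambda>i. weighted_avg (haar_density j k) i) ?S \<Psi> y"
      unfolding haar_vars_def using S assms(1) that by (intro foldr_haar_var_eq_foldr_weighted_avg) auto
    also have "\<dots> = foldr ?avg ?S \<Psi> y"
      by (rule foldr_cong[THEN fun_cong]) (use S in auto)
    finally show ?thesis .
  qed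
  have "avg_vars (dyadic j k) ({1..m} - S) F = foldr ?avg ?C F" for F
    unfolding avg_vars_def avg_var_eq_weighted_avg by (intro foldr_cong) auto
  then have "avg_vars (dyadic j k) ({1..m} - S) (haar_vars j k S \<Psi>) x
      = foldr ?avg ?C (haar_vars j k S \<Psi>) x"
    by simp
  also have "\<dots> = foldr ?avg ?C (foldr ?avg ?S \<Psi>) x"
    by (rule foldr_weighted_avg_cong[where I = "{1..m}", OF _ assms(2) haar]) auto
  also have "\<dots> = foldr ?avg (?C @ ?S) \<Psi> x"
    by simp
  also have "\<dots> = weighted_integral ?W"
  proof (rule foldr_weighted_avg_eq_weighted_integral[OF _ _ assms(2)])
    show "distinct (?C @ ?S)" "set (?C @ ?S) = {1..m}"
      using assms(1) S C by auto
    show "integrable lborel (?W i)" for i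
      using integrable_haar_density integrable_uniform_density[OF dyadic_finite_measure(1,2)] by simp
  qed
  finally show ?thesis .
qed

lemma sum_even_weighted_integral:
  assumes "integrable lborel a" "integrable lborel h"
  shows "(\<Sum>S | S \<subseteq> {1..m} \<and> even (card S). weighted_integral (\<lambda>i. if i \<in> S then h else a))
       = 1/2 * weighted_integral (\<lambda>_ t. a t + h t) + 1/2 * weighted_integral (\<lambda>_ t. a t - h t)"
proof -
  let ?P = "\<lambda>W z. (\<Prod>i\<in>{1..m}. W i (z i)) * \<Psi> z"
  have pointwise: "(\<Sum>S | S \<subseteq> {1..m} \<and> even (card S). ?P (\<lambda>i. if i \<in> S then h else a) z)
      = 1/2 * ?P (\<lambda>_ t. a t + h t) z + 1/2 * ?P (\<lambda>_ t. a t - h t) z" for z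
  proof -
    have "(\<Sum>S | S \<subseteq> {1..m} \<and> even (card S). ?P (\<lambda>i. if i \<in> S then h else a) z)
        = \<Psi> z * (\<Sum>S | S \<subseteq> {1..m} \<and> even (card S). \<Prod>i\<in>{1..m}. if i \<in> S then h (z i) else a (z i))"
      by (simp add: if_distribR sum_distrib_left mult.commute)
    also have "\<dots> = \<Psi> z * ((\<Prod>i\<in>{1..m}. a (z i) + h (z i)) + (\<Prod>i\<in>{1..m}. a (z i) - h (z i))) / 2"
      using arg_cong[OF sum_even_subsets_prod[of "{1..m}" "\<lambda>i. h (z i)" "\<lambda>i. a (z i)"], of "\<lambda>s. \<Psi> z * s / 2"]
      by simp
    finally show ?thesis
      by (simp add: field_simps)
  qed
  have "(\<Sum>S | S \<subseteq> {1..m} \<and> even (card S). weighted_integral (\<lambda>i. if i \<in> S then h else a))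
      = (\<integral>z. (\<Sum>S | S \<subseteq> {1..m} \<and> even (card S). ?P (\<lambda>i. if i \<in> S then h else a) z) \<partial>PiL {1..m})"
    unfolding weighted_integral_def using assms
    by (intro Bochner_Integration.integral_sum[symmetric] integrable_weighted_integral) auto
  also have "\<dots> = (\<integral>z. 1/2 * ?P (\<lambda>_ t. a t + h t) z + 1/2 * ?P (\<lambda>_ t. a t - h t) z \<partial>PiL {1..m})"
    by (simp only: pointwise)
  also have "\<dots> = 1/2 * weighted_integral (\<lambda>_ t. a t + h t) + 1/2 * weighted_integral (\<lambda>_ t. a t - h t)"
    unfolding weighted_integral_def
    using integrable_weighted_integral[OF Bochner_Integration.integrable_add[OF assms]]
      integrable_weighted_integral[OF Bochner_Integration.integrable_diff[OF assms]]
    by simp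
  finally show ?thesis .
qed

lemma weighted_integral_nonneg:
  assumes "\<And>i t. 0 \<le> W i t" "\<And>x. x \<in> space (PiL {1..m}) \<Longrightarrow> 0 \<le> \<Psi> x"
  shows "0 \<le> weighted_integral W"
  unfolding weighted_integral_def using assms
  by (intro Bochner_Integration.integral_nonneg mult_nonneg_nonneg prod_nonneg) auto

end

theorem lemma1:
  fixes m :: nat and j k :: int and \<Psi> :: "(nat \<Rightarrow> real) \<Rightarrow> real"
  assumes meas: "\<Psi> \<in> borel_measurable (PiM {1..m} (\<lambda>_. lborel))"
    and bdd: "\<exists>B. \<forall>x \<in> space (PiM {1..m} (\<lambda>_. lborel)). \<bar>\<Psi> x\<bar> \<le> B"
  shows "(\<Sum>S | S \<subseteq> {1..m} \<and> even (card S).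
            avg_vars (dyadic j k) ({1..m} - S) (haar_vars j k S \<Psi>) (\<lambda>_. undefined))
         = 1/2 * avg_vars (left_half j k) {1..m} \<Psi> (\<lambda>_. undefined)
           + 1/2 * avg_vars (right_half j k) {1..m} \<Psi> (\<lambda>_. undefined)
       \<and> ((\<forall>x \<in> space (PiM {1..m} (\<lambda>_. lborel)). \<Psi> x \<ge> 0) \<longrightarrow>
            (\<Sum>S | S \<subseteq> {1..m} \<and> even (card S).
              avg_vars (dyadic j k) ({1..m} - S) (haar_vars j k S \<Psi>) (\<lambda>_. undefined)) \<ge> 0)"
proof -
  obtain B where "\<forall>x \<in> space (PiL {1..m}). \<bar>\<Psi> x\<bar> \<le> B"
    using bdd by blast
  then interpret bounded_borel_function m \<Psi> B
    using meas by unfold_locales auto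
  have x: "(\<lambda>_. undefined) \<in> space (PiL {1..m})"
    by (simp add: space_PiM PiE_def extensional_def)
  have halves:
    "avg_vars (left_half j k) {1..m} \<Psi> (\<lambda>_. undefined) = weighted_integral (\<lambda>_. uniform_density (left_half j k))"
    "avg_vars (right_half j k) {1..m} \<Psi> (\<lambda>_. undefined) = weighted_integral (\<lambda>_. uniform_density (right_half j k))"
    using dyadic_finite_measure x by (simp_all only: avg_vars_eq_weighted_integral)
  have "(\<Sum>S | S \<subseteq> {1..m} \<and> even (card S).
          avg_vars (dyadic j k) ({1..m} - S) (haar_vars j k S \<Psi>) (\<lambda>_. undefined))
      = (\<Sum>S | S \<subseteq> {1..m} \<and> even (card S).
          weighted_integral (\<lambda>i. if i \<in> S then haar_density j k else uniform_density (dyadic j k)))"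
    using x by (intro sum.cong refl avg_vars_haar_vars_eq_weighted_integral) auto
  also have "\<dots> = 1/2 * avg_vars (left_half j k) {1..m} \<Psi> (\<lambda>_. undefined)
                + 1/2 * avg_vars (right_half j k) {1..m} \<Psi> (\<lambda>_. undefined)"
    unfolding halves uniform_density_left_half uniform_density_right_half
    using integrable_uniform_density[OF dyadic_finite_measure(1,2)] integrable_haar_density
    by (rule sum_even_weighted_integral)
  moreover have "0 \<le> avg_vars J {1..m} \<Psi> (\<lambda>_. undefined)"
    if "J \<in> {left_half j k, right_half j k}" "\<forall>x \<in> space (PiL {1..m}). \<Psi> x \<ge> 0" for J
    using that halves by (auto intro!: weighted_integral_nonneg simp: uniform_density_def)
  ultimately show ?thesis
    by auto
qed

end
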